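(* Let $L$ be even, let $\mathcal{C}\in\mathsf{SCAC}(L,3)$ and let $\mathcal{I}=\{0,q_1,q_1+q_2\}\in\mathcal{C}$ with $q_1,q_2\ge 1$, $q_1+q_2<L$, and put $q_3=L-q_1-q_2$. Assume $q_1,q_2,q_3$ are pairwise distinct, and let $q_l<q_m<q_u$ be $q_1,q_2,q_3$ in increasing order, so that $d^*(\mathcal{I})=\{q_l,q_m,q_u,L-q_u,L-q_m,L-q_l\}$. If $q_u\ge L/2$, then (i) $|d^+(\mathcal{I})|=8$ if $q_m=q_l+1=(L+2)/4$ and $q_u=L/2$; and (ii) $|d^+(\mathcal{I})|\ge 10$ otherwise.
   Context: Identify $\mathbb{Z}_L$ with $\{0,1,\dots,L-1\}$; $\mathcal{P}(L,\omega)$ is the set of $\omega$-element subsets of $\mathbb{Z}_L$ (codewords). For $\mathcal{I}\in\mathcal{P}(L,\omega)$: $d(\mathcal{I})=\{a-b \bmod L: a,b\in\mathcal{I}\}$, $d^*(\mathcal{I})=d(\mathcal{I})\setminus\{0\}$, $d^+(\mathcal{I})=\{x+\epsilon \bmod L: x\in d^*(\mathcal{I}),\epsilon\in\{0,1\}\}$. A strongly conflict-avoiding code (SCAC) of length $L$ and weight $\omega$ is a set $\mathcal{C}=\{\mathcal{I}_1,\dots,\mathcal{I}_M\}\subseteq\mathcal{P}(L,\omega)$ such that for all $j\ne k$, $\big(d^*(\mathcal{I}_j)\cup(d^*(\mathcal{I}_j)+1)\cup(d^*(\mathcal{I}_j)-1)\big)\cap d(\mathcal{I}_k)=\emptyset$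 (shifts mod $L$); $\mathsf{SCAC}(L,\omega)$ is the class of all such codes. (Equivalently: $\{1,L-1\}\cap d^*(\mathcal{I}_j)=\emptyset$ for all $j$ and $d^+(\mathcal{I}_j)\cap d^+(\mathcal{I}_k)=\emptyset$ for $j\ne k$.) *)

theory Defs
  imports Main
begin

text \<open>Z_L is identified with {0..<L}; codewords are omega-element subsets.\<close>

definition codewords :: "nat \<Rightarrow> nat \<Rightarrow> nat set set" where
  "codewords L \<omega> = {I. I \<subseteq> {0..<L} \<and> card I = \<omega>}"

definition diffs :: "nat \<Rightarrow> nat set \<Rightarrow> nat set" where
  "diffs L I = {(a + L - b) mod L | a b. a \<in> I \<and> b \<in> I}"

definition dstar :: "nat \<Rightarrow> nat set \<Rightarrow> nat set" where
  "dstar L I = diffs L I - {0}"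

definition dplus :: "nat \<Rightarrow> nat set \<Rightarrow> nat set" where
  "dplus L I = {(x + e) mod L | x e. x \<in> dstar L I \<and> e \<in> {0, 1}}"

definition SCAC :: "nat \<Rightarrow> nat \<Rightarrow> nat set set set" where
  "SCAC L \<omega> = {C. C \<subseteq> codewords L \<omega> \<and>
      (\<forall>J\<in>C. {1 mod L, (L - 1) mod L} \<inter> dstar L J = {}) \<and>
      (\<forall>J\<in>C. \<forall>K\<in>C. J \<noteq> K \<longrightarrow> dplus L J \<inter> dplus L K = {})}"

end

theory Submission
  imports Defs
begin

(* The difference set of I is d*(I) = {ql, qm, qu, L - ql, L - qm, L - qu}; since the
   gaps sum to L this is {ql, qm, qu, qm + qu, ql + qu, ql + qm}.  The SCAC condition
   excludes the differences 1 and L - 1, so ql >= 2 and no element of d*(I) wraps around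
   when shifted by one: d+(I) = d*(I) u (d*(I) + 1), a list of twelve numbers.
   These twelve numbers split into three blocks of the shape {x, x+1, y, y+1}:
   {ql, qm}, {ql + qm, qu} and {ql + qu, qm + qu}, lying in disjoint ranges.  A block has
   3 elements if y = x + 1, 2 if x = y, and 4 otherwise.  For qu >= L/2 and L even,
   the only possible coincidences are qm = ql + 1 (in the outer blocks) and qu = ql + qm,
   i.e. 2 qu = L (in the middle block), which yields card d+(I) in {8, 10, 12}, with 8
   exactly in the case of part (i). *)

lemma diffs_image: "diffs L I = (\<lambda>(a, b). (a + L - b) mod L) ` (I \<times> I)"
  unfolding diffs_def by auto

lemma dstar_triangle:
  fixes L q1 q2 :: nat
  assumes "q1 \<ge> 1" "q2 \<ge> 1" "q1 + q2 < L" "Q = {q1, q2, L - q1 - q2}"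
  shows "dstar L {0, q1, q1 + q2} = Q \<union> (\<lambda>x. L - x) ` Q"
proof -
  have "diffs L {0, q1, q1 + q2} = {0, q1, q1 + q2, L - q1, L - (q1 + q2), L - q2, q2}"
    using assms(1-3) by (simp add: diffs_image insert_commute)
  then show ?thesis using assms unfolding dstar_def by auto
qed

lemma dstar_less:
  assumes "0 < L" "x \<in> dstar L I"
  shows "x < L"
  using assms unfolding dstar_def diffs_def by auto

(* If L - 1 is not a difference, adding 0 or 1 to a difference never wraps around,
   so d+(I) is d*(I) together with its shift by one. *)
lemma dplus_eq_shift:
  assumes "0 < L" "L - 1 \<notin> dstar L I"
  shows "dplus L I = dstar L I \<union> (\<lambda>x. x + 1) ` dstar L I"
proof -
  have no_wrap: "(x + e) mod L = x + e" if "x \<in> dstar L I" "e \<in> {0, 1}" for x e :: nat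
  proof -
    have "x < L" using dstar_less[OF assms(1) that(1)] .
    moreover have "x \<noteq> L - 1" using that(1) assms(2) by blast
    ultimately have "x + e < L" using that(2) by auto
    then show ?thesis by simp
  qed
  have "dplus L I = {x + e | x e. x \<in> dstar L I \<and> e \<in> {0, 1 :: nat}}"
    unfolding dplus_def using no_wrap by (metis (no_types, opaque_lifting))
  also have "\<dots> = dstar L I \<union> (\<lambda>x. x + 1) ` dstar L I"
  proof (intro set_eqI iffI)
    fix y assume y: "y \<in> dstar L I \<union> (\<lambda>x. x + 1) ` dstar L I"
    show "y \<in> {x + e | x e. x \<in> dstar L I \<and> e \<in> {0, 1 :: nat}}"
    proof (cases "y \<in> dstar L I")
      case True
      then have "y = y + 0 \<and> y \<in> dstar L I \<and> (0 :: nat) \<in> {0, 1}" by simp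
      then show ?thesis by blast
    next
      case False
      then obtain x where "x \<in> dstar L I" "y = x + 1" using y by blast
      then show ?thesis by blast
    qed
  qed auto
  finally show ?thesis .
qed

lemma SCAC_no_unit_diff:
  assumes "C \<in> SCAC L \<omega>" "I \<in> C" "2 \<le> L"
  shows "1 \<notin> dstar L I" "L - 1 \<notin> dstar L I"
proof -
  have "{1 mod L, (L - 1) mod L} \<inter> dstar L I = {}"
    using assms(1,2) unfolding SCAC_def by blast
  moreover have "1 mod L = 1" "(L - 1) mod L = L - 1" using assms(3) by auto
  ultimately show "1 \<notin> dstar L I" "L - 1 \<notin> dstar L I" by auto
qed

lemma card_two_pairs:
  fixes x y :: nat
  shows "card {x, x + 1, y, y + 1} = (if x = y then 2 else if y = x + 1 \<or> x = y + 1 then 3 else 4)"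
  by (auto simp: card_insert_if)

(* The count of d+(I) in terms of sorted gaps a < b < c: three blocks in disjoint
   ranges, where only b = a + 1 and c = a + b produce coincidences. *)
lemma card_shifted_triangle:
  fixes a b c :: nat
  assumes "2 \<le> a" "a < b" "a + b \<le> c" "c \<noteq> a + b + 1"
  shows "card {a, a + 1, b, b + 1, a + b, a + b + 1, c, c + 1, a + c, a + c + 1, b + c, b + c + 1}
         = (if b = a + 1 then 6 else 8) + (if c = a + b then 2 else 4)"
proof -
  define low where "low = {a, a + 1, b, b + 1}"
  define mid where "mid = {a + b, a + b + 1, c, c + 1}"
  define high where "high = {a + c, a + c + 1, b + c, b + c + 1}"
  have "low \<subseteq> {..< a + b}" "mid \<subseteq> {a + b ..}"
    "low \<union> mid \<subseteq> {..< a + c}" "high \<subseteq> {a + c ..}"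
    using assms unfolding low_def mid_def high_def by auto
  then have disjoint: "low \<inter> mid = {}" "(low \<union> mid) \<inter> high = {}"
    by fastforce+
  have "card low = (if b = a + 1 then 3 else 4)"
    unfolding low_def card_two_pairs using assms(2) by auto
  moreover have "card high = (if b = a + 1 then 3 else 4)"
    unfolding high_def card_two_pairs using assms(2) by auto
  moreover have "card mid = (if c = a + b then 2 else 4)"
    unfolding mid_def card_two_pairs using assms(3,4) by auto
  moreover have "finite low" "finite mid" "finite high"
    unfolding low_def mid_def high_def by simp_all
  moreover have "{a, a + 1, b, b + 1, a + b, a + b + 1, c, c + 1, a + c, a + c + 1, b + c, b + c + 1}
      = low \<union> mid \<union> high"
    unfolding low_def mid_def high_def by auto
  ultimately show ?thesis
    using disjoint by (simp add: card_Un_disjoint)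
qed

lemma sum_of_sorted_gaps:
  fixes q1 q2 q3 ql qm qu :: nat
  assumes "q1 \<noteq> q2" "q1 \<noteq> q3" "q2 \<noteq> q3"
    and "{ql, qm, qu} = {q1, q2, q3}" "ql < qm" "qm < qu"
  shows "ql + qm + qu = q1 + q2 + q3"
proof -
  have "\<Sum>{ql, qm, qu} = ql + qm + qu" using assms(5,6) by simp
  moreover have "\<Sum>{q1, q2, q3} = q1 + q2 + q3" using assms(1-3) by simp
  ultimately show ?thesis using assms(4) by simp
qed

(* The nonzero differences of I = {0, q1, q1 + q2} in terms of the sorted gaps
   ql < qm < qu: each gap and the sum of the other two (its negative modulo L). *)
lemma dstar_sorted_gaps:
  fixes L q1 q2 q3 ql qm qu :: nat
  assumes "q1 \<ge> 1" "q2 \<ge> 1" "q1 + q2 < L" "q3 = L - q1 - q2"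
    and "q1 \<noteq> q2" "q1 \<noteq> q3" "q2 \<noteq> q3"
    and "{ql, qm, qu} = {q1, q2, q3}" "ql < qm" "qm < qu"
  shows "ql + qm + qu = L"
    and "dstar L {0, q1, q1 + q2} = {ql, qm, qu, qm + qu, ql + qu, ql + qm}"
proof -
  show L_sum: "ql + qm + qu = L"
    using sum_of_sorted_gaps[OF assms(5-10)] assms(3,4) by simp
  have "L - ql = qm + qu" "L - qm = ql + qu" "L - qu = ql + qm"
    using L_sum by linarith+
  moreover have "dstar L {0, q1, q1 + q2} = {ql, qm, qu} \<union> (\<lambda>x. L - x) ` {ql, qm, qu}"
    using dstar_triangle[OF assms(1-3) refl] assms(4,8) by simp
  ultimately show "dstar L {0, q1, q1 + q2} = {ql, qm, qu, qm + qu, ql + qu, ql + qm}"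
    by (simp add: insert_commute)
qed

theorem mainTheorem2:
  fixes L q1 q2 q3 ql qm qu :: nat and C :: "nat set set"
  assumes "even L"
    and "C \<in> SCAC L 3"
    and "{0, q1, q1 + q2} \<in> C"
    and "q1 \<ge> 1" and "q2 \<ge> 1" and "q1 + q2 < L"
    and "q3 = L - q1 - q2"
    and "q1 \<noteq> q2" and "q1 \<noteq> q3" and "q2 \<noteq> q3"
    and "{ql, qm, qu} = {q1, q2, q3}" and "ql < qm" and "qm < qu"
    and "2 * qu \<ge> L"
  shows "(qm = ql + 1 \<and> 4 * qm = L + 2 \<and> 2 * qu = L \<longrightarrow> card (dplus L {0, q1, q1 + q2}) = 8)
       \<and> (\<not> (qm = ql + 1 \<and> 4 * qm = L + 2 \<and> 2 * qu = L) \<longrightarrow> card (dplus L {0, q1, q1 + q2}) \<ge> 10)"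
proof -
  let ?I = "{0, q1, q1 + q2}"
  have L_sum: "ql + qm + qu = L"
    and dstar_I: "dstar L ?I = {ql, qm, qu, qm + qu, ql + qu, ql + qm}"
    using dstar_sorted_gaps[OF assms(4-13)] by simp_all
  have no_unit: "1 \<notin> dstar L ?I" "L - 1 \<notin> dstar L ?I"
    using SCAC_no_unit_diff[OF assms(2,3)] assms(4-6) by auto
  have "ql \<in> dstar L ?I" unfolding dstar_I by simp
  moreover have "0 \<notin> dstar L ?I" by (simp add: dstar_def)
  ultimately have "ql \<notin> {0, 1}" using no_unit(1) by blast
  then have ql_ge_2: "ql \<ge> 2" by simp
  have "dplus L ?I = dstar L ?I \<union> (\<lambda>x. x + 1) ` dstar L ?I"
    using dplus_eq_shift[OF _ no_unit(2)] assms(6) by simp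
  also have "\<dots> = {ql, ql + 1, qm, qm + 1, ql + qm, ql + qm + 1, qu, qu + 1,
                      ql + qu, ql + qu + 1, qm + qu, qm + qu + 1}"
    unfolding dstar_I by auto
  finally have "dplus L ?I = {ql, ql + 1, qm, qm + 1, ql + qm, ql + qm + 1, qu, qu + 1,
                      ql + qu, ql + qu + 1, qm + qu, qm + qu + 1}" .
  (* qu >= L/2 and evenness of L leave only the coincidence qu = ql + qm in the middle block *)
  moreover have "ql + qm \<le> qu" using assms(14) L_sum by linarith
  moreover have "qu \<noteq> ql + qm + 1" using assms(1) L_sum by presburger
  ultimately have card_I: "card (dplus L ?I)
      = (if qm = ql + 1 then 6 else 8) + (if qu = ql + qm then 2 else 4)"
    using card_shifted_triangle[OF ql_ge_2 assms(12)] by simp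
  have "(qm = ql + 1 \<and> 4 * qm = L + 2 \<and> 2 * qu = L) \<longleftrightarrow> (qm = ql + 1 \<and> qu = ql + qm)"
    using L_sum by linarith
  then show ?thesis using card_I by auto
qed

end
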